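(* Let $\mathcal D=(A,D)$ be a dependence alphabet and suppose there are letters $a,b,c,d\in A$ with $a\neq b$, $(a,b)\in D$, and $c\parallel d$. Then there exist an lc-rational relation $\mathcal R\subseteq\mathbb M(\mathcal D)^2$, a rational set $\mathcal K\subseteq\mathbb M(\mathcal D)$ and a recognizable set $\mathcal L\subseteq\mathbb M(\mathcal D)$ such that ${}^{\mathcal R}\mathcal K$ is not rational and $\mathcal L^{\mathcal R}$ is not recognizable.
   Context: A dependence alphabet is $\mathcal D=(A,D)$, $A$ finite, $D\subseteq A\times A$ reflexive and symmetric; letters $x,y$ are independent if $(x,y)\notin D$, and $c\parallel d$ means $c,d$ are independent. $\sim$ is the least congruence on $A^*$ with $xy\sim yx$ for independent $x,y$; $\mathbb M(\mathcal D)=A^*/{\sim}$, $[w]$ the class of $w$, $[L]=\{[u]\mid u\in L\}$, $[R]=\{([u],[v])\mid(u,v)\in R\}$. A trace language $\mathcal K$ is recognizable if $\{u\mid[u]\in\mathcal K\}$ is regular, rational if $\mathcal K=[L]$ for a regular $L$. A word relation $R$ is left-closed if $u\sim u'$, $(u',v')\in R$ imply some $v$ with $(u,v)\in R$, $v\sim v'$; a trace relation is lc-rational if it equals $[R]$ for a left-closed rational word relation $R$. $\mathcal L^{\mathcal R}=\{y\mid\exists x\in\mathcal L:(x,y)\in\mathcal R\}$ and ${}^{\mathcal R}\mathcal L=\{x\mid\exists y\in\mathcal L:(x,y)\in\mathcal R\}$. *)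

theory Defs
  imports Main
begin

definition dep_alphabet :: "'a set \<Rightarrow> ('a \<times> 'a) set \<Rightarrow> bool" where
  "dep_alphabet A D \<longleftrightarrow> finite A \<and> D \<subseteq> A \<times> A \<and> (\<forall>x\<in>A. (x, x) \<in> D) \<and> sym D"

definition swap_step :: "'a set \<Rightarrow> ('a \<times> 'a) set \<Rightarrow> 'a list \<Rightarrow> 'a list \<Rightarrow> bool" where
  "swap_step A D u v \<longleftrightarrow> (\<exists>p s x y. x \<in> A \<and> y \<in> A \<and> (x, y) \<notin> D \<and>
       u = p @ [x, y] @ s \<and> v = p @ [y, x] @ s)"

text \<open>Trace equivalence: the least congruence with xy ~ yx for independent x, y
  (the reflexive-symmetric-transitive closure of the commutation steps).\<close>
definition trace_eq :: "'a set \<Rightarrow> ('a \<times> 'a) set \<Rightarrow> 'a list \<Rightarrow> 'a list \<Rightarrow> bool" where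
  "trace_eq A D = (sup (swap_step A D) (swap_step A D)\<inverse>\<inverse>)\<^sup>*\<^sup>*"

definition trace :: "'a set \<Rightarrow> ('a \<times> 'a) set \<Rightarrow> 'a list \<Rightarrow> 'a list set" where
  "trace A D w = {v. trace_eq A D w v}"

definition traces :: "'a set \<Rightarrow> ('a \<times> 'a) set \<Rightarrow> 'a list set set" where
  "traces A D = trace A D ` lists A"

inductive regular :: "'a set \<Rightarrow> 'a list set \<Rightarrow> bool" for A where
  fin: "finite L \<Longrightarrow> L \<subseteq> lists A \<Longrightarrow> regular A L"
| union: "regular A L1 \<Longrightarrow> regular A L2 \<Longrightarrow> regular A (L1 \<union> L2)"
| conc: "regular A L1 \<Longrightarrow> regular A L2 \<Longrightarrow> regular A {u @ v | u v. u \<in> L1 \<and> v \<in> L2}"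
| star: "regular A L \<Longrightarrow> regular A {concat ws | ws. set ws \<subseteq> L}"

inductive rat_rel :: "'a set \<Rightarrow> ('a list \<times> 'a list) set \<Rightarrow> bool" for A where
  fin: "finite R \<Longrightarrow> R \<subseteq> lists A \<times> lists A \<Longrightarrow> rat_rel A R"
| union: "rat_rel A R1 \<Longrightarrow> rat_rel A R2 \<Longrightarrow> rat_rel A (R1 \<union> R2)"
| conc: "rat_rel A R1 \<Longrightarrow> rat_rel A R2 \<Longrightarrow>
     rat_rel A {(u1 @ u2, v1 @ v2) | u1 u2 v1 v2. (u1, v1) \<in> R1 \<and> (u2, v2) \<in> R2}"
| star: "rat_rel A R \<Longrightarrow>
     rat_rel A {(concat (map fst ps), concat (map snd ps)) | ps. set ps \<subseteq> R}"

definition recognizable_tr :: "'a set \<Rightarrow> ('a \<times> 'a) set \<Rightarrow> 'a list set set \<Rightarrow> bool" where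
  "recognizable_tr A D K \<longleftrightarrow> K \<subseteq> traces A D \<and> regular A {u \<in> lists A. trace A D u \<in> K}"

definition rational_tr :: "'a set \<Rightarrow> ('a \<times> 'a) set \<Rightarrow> 'a list set set \<Rightarrow> bool" where
  "rational_tr A D K \<longleftrightarrow> (\<exists>L. regular A L \<and> K = trace A D ` L)"

definition left_closed :: "'a set \<Rightarrow> ('a \<times> 'a) set \<Rightarrow> ('a list \<times> 'a list) set \<Rightarrow> bool" where
  "left_closed A D R \<longleftrightarrow> (\<forall>u u' v'. trace_eq A D u u' \<and> (u', v') \<in> R \<longrightarrow>
       (\<exists>v. (u, v) \<in> R \<and> trace_eq A D v v'))"

definition lc_rational :: "'a set \<Rightarrow> ('a \<times> 'a) set \<Rightarrow> ('a list set \<times> 'a list set) set \<Rightarrow> bool" where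
  "lc_rational A D \<R> \<longleftrightarrow> (\<exists>R. rat_rel A R \<and> left_closed A D R \<and>
       \<R> = {(trace A D u, trace A D v) | u v. (u, v) \<in> R})"

definition rel_image :: "'t set \<Rightarrow> ('t \<times> 't) set \<Rightarrow> 't set" where
  "rel_image L R = {y. \<exists>x\<in>L. (x, y) \<in> R}"

definition rel_preimage :: "('t \<times> 't) set \<Rightarrow> 't set \<Rightarrow> 't set" where
  "rel_preimage R K = {x. \<exists>y\<in>K. (x, y) \<in> R}"

end

theory Submission
  imports Defs "HOL-Library.Multiset"
begin

(* Since a and b are dependent, a word over {a, b} is the only member of its trace, so on
   such words rational sets, recognizable sets and regular languages coincide; since c and d
   are independent, (cd)^n ~ c^n d^n.  Take R = {(a^i b^j, c^i d^j)} + {(a^n, (cd)^n)}: it is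
   rational, and left-closed because its first components are alone in their traces.
   For K = [(cd)^*] the preimage is [{a^n b^n} + a^*], and for L = [a^*] the image is
   [c^* + (cd)^*], whose set of representatives contains every c^n d^n and otherwise only
   words with no d or with as many c as d.  Neither language is regular: pumping
   a^N b^N (resp. c^N d^N) inside its first N letters upsets that balance. *)

section \<open>Trace equivalence\<close>

lemma equivp_trace_eq: "equivp (trace_eq A D)"
  unfolding trace_eq_def symclp_pointfree[symmetric] by simp

lemma trace_eq_refl [simp]: "trace_eq A D u u"
  using equivp_reflp[OF equivp_trace_eq] .

lemma trace_eq_sym: "trace_eq A D u v \<Longrightarrow> trace_eq A D v u"
  using equivp_symp[OF equivp_trace_eq] .

lemma trace_eq_trans: "trace_eq A D u v \<Longrightarrow> trace_eq A D v w \<Longrightarrow> trace_eq A D u w"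
  using equivp_transp[OF equivp_trace_eq] .

lemma trace_eq_iff: "trace A D u = trace A D v \<longleftrightarrow> trace_eq A D u v"
  unfolding trace_def using equivp_trace_eq[unfolded equivp_def] by (metis mem_Collect_eq)

lemma trace_eq_swap:
  assumes "x \<in> A" "y \<in> A" "(x, y) \<notin> D"
  shows "trace_eq A D (p @ x # y # s) (p @ y # x # s)"
proof -
  have "swap_step A D (p @ x # y # s) (p @ y # x # s)"
    unfolding swap_step_def using assms by fastforce
  then show ?thesis unfolding trace_eq_def by auto
qed

lemma swap_step_append_cong: "swap_step A D u v \<Longrightarrow> swap_step A D (p @ u @ s) (p @ v @ s)"
  unfolding swap_step_def by (metis append.assoc)

lemma trace_eq_append_cong: "trace_eq A D u v \<Longrightarrow> trace_eq A D (p @ u @ s) (p @ v @ s)"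
  unfolding trace_eq_def
proof (induction rule: rtranclp_induct)
  case (step v w)
  then have "(sup (swap_step A D) (swap_step A D)\<inverse>\<inverse>) (p @ v @ s) (p @ w @ s)"
    using swap_step_append_cong by fastforce
  with step.IH show ?case by (rule rtranclp.rtrancl_into_rtrancl)
qed simp

lemma trace_eq_mset: "trace_eq A D u v \<Longrightarrow> mset u = mset v"
  unfolding trace_eq_def by (induction rule: rtranclp_induct) (auto simp: swap_step_def)

lemma trace_eq_clique_word:
  assumes "set u \<times> set u \<subseteq> D" "trace_eq A D u v"
  shows "v = u"
  using assms(2) unfolding trace_eq_def
proof (induction rule: rtranclp_induct)
  case (step v w)
  then have "swap_step A D u w \<or> swap_step A D w u" by auto
  then show ?case using assms(1) unfolding swap_step_def by auto
qed simp

lemma trace_eq_move_past: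
  assumes "x \<in> A" "y \<in> A" "(x, y) \<notin> D"
  shows "trace_eq A D (y # replicate n x) (replicate n x @ [y])"
proof (induction n)
  case (Suc n)
  have "trace_eq A D (y # x # replicate n x) (x # y # replicate n x)"
    using trace_eq_sym[OF trace_eq_swap[OF assms, of "[]"]] by simp
  moreover have "trace_eq A D (x # y # replicate n x) (x # replicate n x @ [y])"
    using trace_eq_append_cong[OF Suc.IH, of "[x]" "[]"] by simp
  ultimately show ?case by (simp add: trace_eq_trans)
qed simp

lemma trace_eq_commute_independent:
  assumes "x \<in> A" "y \<in> A" "(x, y) \<notin> D"
  shows "trace_eq A D (concat (replicate n [x, y])) (replicate n x @ replicate n y)"
proof (induction n)
  case (Suc n)
  have "trace_eq A D (x # y # concat (replicate n [x, y])) (x # y # replicate n x @ replicate n y)"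
    using trace_eq_append_cong[OF Suc.IH, of "[x, y]" "[]"] by simp
  moreover have "trace_eq A D (x # y # replicate n x @ replicate n y) (x # replicate n x @ y # replicate n y)"
    using trace_eq_append_cong[OF trace_eq_move_past[OF assms], of "[x]" n "replicate n y"] by simp
  ultimately show ?case by (simp add: trace_eq_trans replicate_append_same)
qed simp

section \<open>Rational relations and the pumping lemma\<close>

lemma lists_singleton: "lists {x} = range (\<lambda>n. replicate n x)"
  by (auto simp: in_lists_conv_set intro: replicate_length_same[symmetric])

lemma regular_star_single:
  assumes "w \<in> lists A"
  shows "regular A (range (\<lambda>n. concat (replicate n w)))"
proof -
  have "{concat ws | ws. set ws \<subseteq> {w}} = concat ` lists {w}"
    by (auto simp: in_lists_conv_set)
  also have "\<dots> = range (\<lambda>n. concat (replicate n w))"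
    by (simp add: lists_singleton image_image)
  finally show ?thesis
    using regular.star[OF regular.fin[of "{w}"]] assms by simp
qed

lemma rat_rel_star_single:
  assumes "u \<in> lists A" "v \<in> lists A"
  shows "rat_rel A (range (\<lambda>n. (concat (replicate n u), concat (replicate n v))))"
proof -
  have "{(concat (map fst ps), concat (map snd ps)) | ps. set ps \<subseteq> {(u, v)}}
      = (\<lambda>ps. (concat (map fst ps), concat (map snd ps))) ` lists {(u, v)}"
    by (auto simp: in_lists_conv_set)
  also have "\<dots> = range (\<lambda>n. (concat (replicate n u), concat (replicate n v)))"
    by (simp add: lists_singleton image_image)
  finally show ?thesis
    using rat_rel.star[OF rat_rel.fin[of "{(u, v)}"]] assms by simp
qed

definition pumping_length :: "'a list set \<Rightarrow> nat \<Rightarrow> bool" where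
  "pumping_length L N \<longleftrightarrow> (\<forall>w\<in>L. N \<le> length w \<longrightarrow>
     (\<exists>x y z. w = x @ y @ z \<and> y \<noteq> [] \<and> length (x @ y) \<le> N \<and> x @ y @ y @ z \<in> L))"

lemma pumping_length_mono: "pumping_length L N \<Longrightarrow> N \<le> M \<Longrightarrow> pumping_length L M"
  unfolding pumping_length_def by (meson order_trans)

lemma pumping_length_finite:
  assumes "finite L"
  shows "pumping_length L (Suc (Max (length ` L)))"
proof -
  have "length w < Suc (Max (length ` L))" if "w \<in> L" for w
    using assms that by (simp add: less_Suc_eq_le)
  then show ?thesis unfolding pumping_length_def by (meson not_le)
qed

lemma pumping_length_union:
  "pumping_length L1 N \<Longrightarrow> pumping_length L2 N \<Longrightarrow> pumping_length (L1 \<union> L2) N"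
  unfolding pumping_length_def by blast

lemma pumping_length_conc:
  assumes "pumping_length L1 N1" "pumping_length L2 N2"
  shows "pumping_length {u @ v | u v. u \<in> L1 \<and> v \<in> L2} (N1 + N2)"
  unfolding pumping_length_def
proof (intro ballI impI)
  fix w assume "w \<in> {u @ v | u v. u \<in> L1 \<and> v \<in> L2}" and long: "N1 + N2 \<le> length w"
  then obtain u v where w: "w = u @ v" "u \<in> L1" "v \<in> L2" by blast
  show "\<exists>x y z. w = x @ y @ z \<and> y \<noteq> [] \<and> length (x @ y) \<le> N1 + N2 \<and>
      x @ y @ y @ z \<in> {u @ v | u v. u \<in> L1 \<and> v \<in> L2}"
  proof (cases "N1 \<le> length u")
    case True
    then obtain x y z where "u = x @ y @ z" "y \<noteq> []" "length (x @ y) \<le> N1" "x @ y @ y @ z \<in> L1"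
      using assms(1) w(2) unfolding pumping_length_def by blast
    moreover have "(x @ y @ y @ z) @ v \<in> {u @ v | u v. u \<in> L1 \<and> v \<in> L2}"
      using calculation(4) w(3) by blast
    ultimately have "w = x @ y @ (z @ v) \<and> y \<noteq> [] \<and> length (x @ y) \<le> N1 + N2 \<and>
        x @ y @ y @ (z @ v) \<in> {u @ v | u v. u \<in> L1 \<and> v \<in> L2}"
      using w(1) by simp
    then show ?thesis by blast
  next
    case False
    then have "N2 \<le> length v" using long w(1) by simp
    then obtain x y z where "v = x @ y @ z" "y \<noteq> []" "length (x @ y) \<le> N2" "x @ y @ y @ z \<in> L2"
      using assms(2) w(3) unfolding pumping_length_def by blast
    moreover have "u @ (x @ y @ y @ z) \<in> {u @ v | u v. u \<in> L1 \<and> v \<in> L2}"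
      using calculation(4) w(2) by blast
    ultimately have "w = (u @ x) @ y @ z \<and> y \<noteq> [] \<and> length ((u @ x) @ y) \<le> N1 + N2 \<and>
        (u @ x) @ y @ y @ z \<in> {u @ v | u v. u \<in> L1 \<and> v \<in> L2}"
      using w(1) False by simp
    then show ?thesis by blast
  qed
qed

text \<open>Pump inside the first nonempty factor if it is long, otherwise repeat that whole factor.\<close>
lemma pumping_concat:
  assumes "pumping_length L N" "set ws \<subseteq> L" "concat ws \<noteq> []"
  shows "\<exists>x y z. concat ws = x @ y @ z \<and> y \<noteq> [] \<and> length (x @ y) \<le> N \<and>
     x @ y @ y @ z \<in> {concat ws | ws. set ws \<subseteq> L}"
  using assms(2,3)
proof (induction ws)
  case (Cons u ws)
  consider "u = []" | "u \<noteq> []" "N \<le> length u" | "u \<noteq> []" "length u < N" by linarith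
  then show ?case
  proof cases
    case 1
    with Cons show ?thesis by simp
  next
    case 2
    then obtain x y z where "u = x @ y @ z" "y \<noteq> []" "length (x @ y) \<le> N" "x @ y @ y @ z \<in> L"
      using assms(1) Cons.prems(1) unfolding pumping_length_def by (meson list.set_intros(1) subsetD)
    moreover have "concat ((x @ y @ y @ z) # ws) \<in> {concat ws | ws. set ws \<subseteq> L}"
      using calculation(4) Cons.prems(1) by (metis (mono_tags) insert_subset list.set(2) mem_Collect_eq)
    ultimately have "concat (u # ws) = x @ y @ (z @ concat ws) \<and> y \<noteq> [] \<and> length (x @ y) \<le> N \<and>
        x @ y @ y @ (z @ concat ws) \<in> {concat ws | ws. set ws \<subseteq> L}"
      by simp
    then show ?thesis by blast
  next
    case 3
    have "concat (u # u # ws) \<in> {concat ws | ws. set ws \<subseteq> L}"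
      using Cons.prems(1) by (metis (mono_tags) insert_subset list.set(2) mem_Collect_eq)
    with 3 have "concat (u # ws) = [] @ u @ concat ws \<and> u \<noteq> [] \<and> length ([] @ u) \<le> N \<and>
        [] @ u @ u @ concat ws \<in> {concat ws | ws. set ws \<subseteq> L}"
      by simp
    then show ?thesis by blast
  qed
qed simp

lemma pumping_length_star:
  assumes "pumping_length L N"
  shows "pumping_length {concat ws | ws. set ws \<subseteq> L} (Suc N)"
  unfolding pumping_length_def
proof (intro ballI impI)
  fix w assume "w \<in> {concat ws | ws. set ws \<subseteq> L}" and long: "Suc N \<le> length w"
  then obtain ws where ws: "w = concat ws" "set ws \<subseteq> L" by blast
  have "concat ws \<noteq> []" using long ws(1) by (metis le_zero_eq list.size(3) nat.distinct(1))
  obtain x y z where "concat ws = x @ y @ z" "y \<noteq> []" "length (x @ y) \<le> N"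
      "x @ y @ y @ z \<in> {concat ws | ws. set ws \<subseteq> L}"
    using pumping_concat[OF assms ws(2) \<open>concat ws \<noteq> []\<close>] by blast
  with ws(1) have "w = x @ y @ z \<and> y \<noteq> [] \<and> length (x @ y) \<le> Suc N \<and>
      x @ y @ y @ z \<in> {concat ws | ws. set ws \<subseteq> L}"
    by simp
  then show "\<exists>x y z. w = x @ y @ z \<and> y \<noteq> [] \<and> length (x @ y) \<le> Suc N \<and>
      x @ y @ y @ z \<in> {concat ws | ws. set ws \<subseteq> L}"
    by blast
qed

lemma regular_pumping_length: "regular A L \<Longrightarrow> \<exists>N. pumping_length L N"
proof (induction rule: regular.induct)
  case (fin L)
  then have "pumping_length L (Suc (Max (length ` L)))" using pumping_length_finite by blast
  then show ?case ..
next
  case (union L1 L2)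
  then obtain N1 N2 where "pumping_length L1 N1" "pumping_length L2 N2" by blast
  then have "pumping_length (L1 \<union> L2) (max N1 N2)"
    by (intro pumping_length_union pumping_length_mono[OF _ max.cobounded1]
        pumping_length_mono[OF _ max.cobounded2])
  then show ?case ..
next
  case (conc L1 L2)
  then obtain N1 N2 where "pumping_length L1 N1" "pumping_length L2 N2" by blast
  then have "pumping_length {u @ v | u v. u \<in> L1 \<and> v \<in> L2} (N1 + N2)"
    by (rule pumping_length_conc)
  then show ?case ..
next
  case (star L)
  then obtain N where "pumping_length L N" by blast
  then have "pumping_length {concat ws | ws. set ws \<subseteq> L} (Suc N)" by (rule pumping_length_star)
  then show ?case ..
qed

lemma mset_pump_replicate_append:
  assumes "x @ y @ z = replicate N p @ replicate N q" "length (x @ y) \<le> N"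
  shows "mset (x @ y @ y @ z) = mset (replicate (N + length y) p @ replicate N q)"
proof -
  have "x @ y = take (length (x @ y)) (replicate N p @ replicate N q)"
    by (simp flip: assms(1))
  also have "\<dots> = replicate (length (x @ y)) p"
    using assms(2)
    by (simp only: take_append take_replicate length_replicate min_absorb1 diff_is_0_eq'
        replicate_0 append_Nil2)
  finally have "set y \<subseteq> {p}"
    by (metis in_set_replicate set_append UnCI subsetI singletonI)
  then have y: "y = replicate (length y) p"
    by (simp add: replicate_length_same subset_iff)
  have "mset (x @ y @ y @ z) = mset (x @ y @ z) + mset (replicate (length y) p)"
    by (simp flip: y)
  also have "\<dots> = mset (replicate (N + length y) p @ replicate N q)"
    by (simp add: assms(1) replicate_add)
  finally show ?thesis .
qed

lemma mset_replicate_append_eq_iff: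
  assumes "p \<noteq> q"
  shows "mset (replicate i p @ replicate j q) = mset (replicate k p @ replicate l q)
    \<longleftrightarrow> i = k \<and> j = l"
proof
  assume eq: "mset (replicate i p @ replicate j q) = mset (replicate k p @ replicate l q)"
  show "i = k \<and> j = l"
    using arg_cong[OF eq, of "\<lambda>M. count M p"] arg_cong[OF eq, of "\<lambda>M. count M q"] assms by simp
qed simp

lemma not_regular_balanced:
  assumes "p \<noteq> q" "\<And>n. replicate n p @ replicate n q \<in> L"
    and "\<And>w. w \<in> L \<Longrightarrow> count (mset w) q = 0 \<or> count (mset w) p = count (mset w) q"
  shows "\<not> regular A L"
proof
  assume "regular A L"
  then obtain N where "pumping_length L N" using regular_pumping_length by blast
  moreover have "N \<le> length (replicate N p @ replicate N q)" by simp
  ultimately obtain x y z where xyz: "replicate N p @ replicate N q = x @ y @ z" "y \<noteq> []"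
      "length (x @ y) \<le> N" "x @ y @ y @ z \<in> L"
    using assms(2) unfolding pumping_length_def by blast
  have "mset (x @ y @ y @ z) = mset (replicate (N + length y) p @ replicate N q)"
    using mset_pump_replicate_append[OF xyz(1)[symmetric] xyz(3)] .
  then have "count (mset (x @ y @ y @ z)) p = N + length y" "count (mset (x @ y @ y @ z)) q = N"
    using assms(1) by simp_all
  moreover have "length y > 0" using xyz(2) by simp
  moreover have "N > 0" using xyz(3) \<open>length y > 0\<close> by (simp only: length_append)
  ultimately show False using assms(3)[OF xyz(4)] by simp
qed

section \<open>Traces with a single representative\<close>

lemma trace_clique_word:
  assumes "set u \<times> set u \<subseteq> D"
  shows "trace A D u = {u}"
  using trace_eq_clique_word[OF assms] unfolding trace_def by auto

lemma eq_if_trace_eq_singleton: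
  assumes "trace A D u = {u}" "trace A D w = trace A D u"
  shows "w = u"
proof -
  have "w \<in> trace A D w" unfolding trace_def by simp
  with assms show ?thesis by simp
qed

definition trace_rel ::
    "'a set \<Rightarrow> ('a \<times> 'a) set \<Rightarrow> ('a list \<times> 'a list) set \<Rightarrow> ('a list set \<times> 'a list set) set"
  where
  "trace_rel A D R = {(trace A D u, trace A D v) | u v. (u, v) \<in> R}"

lemma left_closed_if_rigid_domain:
  assumes "\<And>u v. (u, v) \<in> R \<Longrightarrow> trace A D u = {u}"
  shows "left_closed A D R"
  unfolding left_closed_def
proof (intro allI impI)
  fix u u' v' assume "trace_eq A D u u' \<and> (u', v') \<in> R"
  moreover from this have "u = u'"
    using assms unfolding trace_def by (blast dest: trace_eq_sym)
  ultimately show "\<exists>v. (u, v) \<in> R \<and> trace_eq A D v v'" by auto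
qed

lemma lc_rational_trace_rel:
  "rat_rel A R \<Longrightarrow> left_closed A D R \<Longrightarrow> lc_rational A D (trace_rel A D R)"
  unfolding lc_rational_def trace_rel_def by blast

lemma regular_if_rational_rigid:
  assumes "rational_tr A D (trace A D ` P)" "\<And>u. u \<in> P \<Longrightarrow> trace A D u = {u}"
  shows "regular A P"
proof -
  obtain L where L: "regular A L" "trace A D ` P = trace A D ` L"
    using assms(1) unfolding rational_tr_def by blast
  have "L = P"
  proof (intro equalityI subsetI)
    fix w assume "w \<in> L"
    then obtain u where "u \<in> P" "trace A D w = trace A D u" using L(2) by (metis imageE imageI)
    then show "w \<in> P" using eq_if_trace_eq_singleton[OF assms(2)] by metis
  next
    fix u assume "u \<in> P"
    then obtain w where "w \<in> L" "trace A D w = trace A D u" using L(2) by (metis imageE imageI)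
    then show "u \<in> L" using eq_if_trace_eq_singleton[OF assms(2)[OF \<open>u \<in> P\<close>]] by blast
  qed
  with L(1) show ?thesis by simp
qed

lemma recognizable_if_regular_rigid:
  assumes "P \<subseteq> lists A" "regular A P" "\<And>u. u \<in> P \<Longrightarrow> trace A D u = {u}"
  shows "recognizable_tr A D (trace A D ` P)"
proof -
  have "{u \<in> lists A. trace A D u \<in> trace A D ` P} = P"
    using assms(1) eq_if_trace_eq_singleton[OF assms(3)] by auto
  moreover have "trace A D ` P \<subseteq> traces A D"
    unfolding traces_def using assms(1) by blast
  ultimately show ?thesis unfolding recognizable_tr_def using assms(2) by simp
qed

section \<open>The counterexample\<close>

locale dependent_and_independent_pair =
  fixes A :: "'a set" and D :: "('a \<times> 'a) set" and a b c d :: 'a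
  assumes dep_alphabet: "dep_alphabet A D"
    and letters: "a \<in> A" "b \<in> A" "c \<in> A" "d \<in> A"
    and a_neq_b: "a \<noteq> b" and ab_dependent: "(a, b) \<in> D" and cd_independent: "(c, d) \<notin> D"
begin

definition R :: "('a list \<times> 'a list) set" where
  "R = {(replicate i a @ replicate j b, replicate i c @ replicate j d) | i j. True}
     \<union> {(replicate n a, concat (replicate n [c, d])) | n. True}"

definition K :: "'a list set set" where
  "K = trace A D ` range (\<lambda>n. concat (replicate n [c, d]))"

definition L :: "'a list set set" where
  "L = trace A D ` range (\<lambda>n. replicate n a)"

lemma c_neq_d: "c \<noteq> d"
  using dep_alphabet letters cd_independent unfolding dep_alphabet_def by auto

lemma trace_ab_word:
  assumes "set u \<subseteq> {a, b}"
  shows "trace A D u = {u}"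
proof -
  have "(b, a) \<in> D" "(a, a) \<in> D" "(b, b) \<in> D"
    using dep_alphabet letters ab_dependent unfolding dep_alphabet_def by (auto dest: symD)
  then have "set u \<times> set u \<subseteq> D" using assms ab_dependent by blast
  then show ?thesis by (rule trace_clique_word)
qed

lemma trace_replicate_ab: "trace A D (replicate i a @ replicate j b) = {replicate i a @ replicate j b}"
  by (rule trace_ab_word) auto

lemma trace_replicate_a: "trace A D (replicate n a) = {replicate n a}"
  using trace_replicate_ab[of n 0] by simp

lemma trace_cd_power: "trace A D (concat (replicate n [c, d])) = trace A D (replicate n c @ replicate n d)"
  using trace_eq_commute_independent[OF letters(3,4) cd_independent] trace_eq_iff by blast

lemma mset_cd_power: "mset (concat (replicate n [c, d])) = mset (replicate n c @ replicate n d)"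
  using trace_eq_commute_independent[OF letters(3,4) cd_independent] by (rule trace_eq_mset)

lemma R_fst_ab_word: "(u, v) \<in> R \<Longrightarrow> set u \<subseteq> {a, b}"
  unfolding R_def by auto

lemma rat_rel_R: "rat_rel A R"
proof -
  have ac: "rat_rel A (range (\<lambda>n. (replicate n a, replicate n c)))"
    using rat_rel_star_single[of "[a]" A "[c]"] letters by simp
  have bd: "rat_rel A (range (\<lambda>n. (replicate n b, replicate n d)))"
    using rat_rel_star_single[of "[b]" A "[d]"] letters by simp
  have acd: "rat_rel A (range (\<lambda>n. (replicate n a, concat (replicate n [c, d]))))"
    using rat_rel_star_single[of "[a]" A "[c, d]"] letters by simp
  have "R = {(u1 @ u2, v1 @ v2) | u1 u2 v1 v2.
      (u1, v1) \<in> range (\<lambda>n. (replicate n a, replicate n c)) \<and>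
      (u2, v2) \<in> range (\<lambda>n. (replicate n b, replicate n d))}
      \<union> range (\<lambda>n. (replicate n a, concat (replicate n [c, d])))"
    unfolding R_def by blast
  then show ?thesis by (simp only:) (intro rat_rel.union rat_rel.conc ac bd acd)
qed

lemma lc_rational_R: "lc_rational A D (trace_rel A D R)"
proof (rule lc_rational_trace_rel[OF rat_rel_R left_closed_if_rigid_domain])
  fix u v assume "(u, v) \<in> R"
  then show "trace A D u = {u}" by (intro trace_ab_word R_fst_ab_word)
qed

lemma rational_K: "rational_tr A D K"
  unfolding rational_tr_def K_def using letters
  by (intro exI[of _ "range (\<lambda>n. concat (replicate n [c, d]))"] conjI regular_star_single) auto

lemma recognizable_L: "recognizable_tr A D L"
proof -
  have "regular A (range (\<lambda>n. concat (replicate n [a])))"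
    using letters by (intro regular_star_single) auto
  then show ?thesis
    unfolding L_def using letters
    by (intro recognizable_if_regular_rigid) (auto simp: trace_replicate_a)
qed

lemma preimage_K:
  "rel_preimage (trace_rel A D R) K
     = trace A D ` ({replicate n a @ replicate n b | n. True} \<union> range (\<lambda>n. replicate n a))"
  (is "_ = trace A D ` ?P")
proof (intro equalityI subsetI)
  fix x assume "x \<in> rel_preimage (trace_rel A D R) K"
  then obtain u v m where uv: "x = trace A D u" "(u, v) \<in> R"
      "trace A D v = trace A D (concat (replicate m [c, d]))"
    unfolding rel_preimage_def trace_rel_def K_def by auto
  then have mset_v: "mset v = mset (replicate m c @ replicate m d)"
    using mset_cd_power trace_eq_iff trace_eq_mset by metis
  have "u \<in> ?P" using uv(2) unfolding R_def
  proof (elim UnE CollectE exE conjE)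
    fix i j assume "(u, v) = (replicate i a @ replicate j b, replicate i c @ replicate j d)"
    then have "u = replicate i a @ replicate j b"
      "mset (replicate i c @ replicate j d) = mset (replicate m c @ replicate m d)"
      using mset_v by simp_all
    then show "u \<in> ?P" by (simp only: mset_replicate_append_eq_iff[OF c_neq_d]) blast
  qed auto
  with uv(1) show "x \<in> trace A D ` ?P" by blast
next
  fix x assume "x \<in> trace A D ` ?P"
  then obtain n where "x = trace A D (replicate n a @ replicate n b) \<or> x = trace A D (replicate n a)"
    by auto
  moreover have "(replicate n a @ replicate n b, replicate n c @ replicate n d) \<in> R"
      "(replicate n a, concat (replicate n [c, d])) \<in> R"
    unfolding R_def by auto
  moreover have "trace A D (replicate n c @ replicate n d) \<in> K" "trace A D (concat (replicate n [c, d])) \<in> K"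
    unfolding K_def by (auto simp flip: trace_cd_power)
  ultimately show "x \<in> rel_preimage (trace_rel A D R) K"
    unfolding rel_preimage_def trace_rel_def by blast
qed

lemma preimage_K_not_rational: "\<not> rational_tr A D (rel_preimage (trace_rel A D R) K)"
proof
  let ?P = "{replicate n a @ replicate n b | n. True} \<union> range (\<lambda>n. replicate n a)"
  assume "rational_tr A D (rel_preimage (trace_rel A D R) K)"
  then have "regular A ?P"
    unfolding preimage_K
    by (rule regular_if_rational_rigid) (auto simp: trace_replicate_ab trace_replicate_a)
  moreover have "\<not> regular A ?P"
    using a_neq_b by (intro not_regular_balanced) auto
  ultimately show False by simp
qed

lemma image_L:
  "rel_image L (trace_rel A D R)
     = trace A D ` (range (\<lambda>n. replicate n c) \<union> range (\<lambda>n. concat (replicate n [c, d])))"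
  (is "_ = trace A D ` ?Q")
proof (intro equalityI subsetI)
  fix y assume "y \<in> rel_image L (trace_rel A D R)"
  then obtain u v n where uv: "y = trace A D v" "(u, v) \<in> R" "trace A D u = trace A D (replicate n a)"
    unfolding rel_image_def trace_rel_def L_def by auto
  have "u = replicate n a"
    using eq_if_trace_eq_singleton[OF trace_replicate_a uv(3)] by simp
  have "v \<in> ?Q" using uv(2) unfolding R_def
  proof (elim UnE CollectE exE conjE)
    fix i j assume "(u, v) = (replicate i a @ replicate j b, replicate i c @ replicate j d)"
    then have "replicate n a @ replicate 0 b = replicate i a @ replicate j b"
      "v = replicate i c @ replicate j d"
      using \<open>u = replicate n a\<close> by simp_all
    then have "n = i \<and> 0 = j" "v = replicate i c @ replicate j d"
      using mset_replicate_append_eq_iff[OF a_neq_b] by metis+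
    then show "v \<in> ?Q" by simp
  qed auto
  with uv(1) show "y \<in> trace A D ` ?Q" by blast
next
  fix y assume "y \<in> trace A D ` ?Q"
  then obtain n where "y = trace A D (replicate n c) \<or> y = trace A D (concat (replicate n [c, d]))"
    by auto
  moreover have "(replicate n a @ replicate 0 b, replicate n c @ replicate 0 d) \<in> R"
      "(replicate n a, concat (replicate n [c, d])) \<in> R"
    unfolding R_def by blast+
  ultimately show "y \<in> rel_image L (trace_rel A D R)"
    unfolding rel_image_def trace_rel_def L_def by auto
qed

lemma image_L_not_recognizable: "\<not> recognizable_tr A D (rel_image L (trace_rel A D R))"
proof
  let ?W = "{u \<in> lists A. trace A D u \<in> rel_image L (trace_rel A D R)}"
  assume "recognizable_tr A D (rel_image L (trace_rel A D R))"
  then have "regular A ?W" unfolding recognizable_tr_def by blast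
  moreover have "\<not> regular A ?W"
  proof (rule not_regular_balanced[OF c_neq_d])
    fix n
    have "trace A D (replicate n c @ replicate n d) \<in> rel_image L (trace_rel A D R)"
      unfolding image_L by (auto simp flip: trace_cd_power)
    then show "replicate n c @ replicate n d \<in> ?W" using letters by auto
  next
    fix w assume "w \<in> ?W"
    then obtain n where "trace A D w = trace A D (replicate n c @ replicate 0 d)
        \<or> trace A D w = trace A D (concat (replicate n [c, d]))"
      unfolding image_L by auto
    then have "mset w = mset (replicate n c @ replicate 0 d) \<or> mset w = mset (replicate n c @ replicate n d)"
      using trace_eq_iff trace_eq_mset mset_cd_power by metis
    then show "count (mset w) d = 0 \<or> count (mset w) c = count (mset w) d"
      using c_neq_d by (elim disjE) simp_all
  qed
  ultimately show False by simp
qed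

end

theorem lemma4p17:
  fixes A :: "'a set" and D :: "('a \<times> 'a) set" and a b c d :: 'a
  assumes "dep_alphabet A D"
    and "a \<in> A" "b \<in> A" "c \<in> A" "d \<in> A"
    and "a \<noteq> b" "(a, b) \<in> D" "(c, d) \<notin> D"
  shows "\<exists>\<R> K L. lc_rational A D \<R> \<and> rational_tr A D K \<and> recognizable_tr A D L \<and>
           \<not> rational_tr A D (rel_preimage \<R> K) \<and> \<not> recognizable_tr A D (rel_image L \<R>)"
proof -
  interpret dependent_and_independent_pair A D a b c d
    using assms by unfold_locales
  show ?thesis
    using lc_rational_R rational_K recognizable_L preimage_K_not_rational image_L_not_recognizable
    by blast
qed

end
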